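(* Assume (i) consistency: $Y=Y^a$ whenever $A=a$; (ii) treatment positivity: $\pi_a(\mathbf X)>0$ a.s. under $\mathbb P(\cdot\mid S=1)$ for all $a$; (iii) selection positivity: $\rho(\mathbf V)>0$ a.s.; (iv) there is a constant $\delta_1>0$ with $\big|\mathbb E[Y^a\mid \mathbf X,A=1,S=1]-\mathbb E[Y^a\mid\mathbf X,A=0,S=1]\big|\le\delta_1$ a.s. for all $a$; (v) there is a constant $\delta_2>0$ with $\big|\mathbb E[Y^a\mid \mathbf V,S=0]-\mathbb E[Y^a\mid \mathbf V,S=1]\big|\le\delta_2$ a.s. for all $a$. Then for each $a\in\{0,1\}$, $$\psi_a\in\Big[\mathbb E[\tau_a(\mathbf V)]-\delta_1\mathbb E[\mathbb P(A=1-a\mid \mathbf V,S=1)]-\delta_2\mathbb P(S=0),\ \mathbb E[\tau_a(\mathbf V)]+\delta_1\mathbb E[\mathbb P(A=1-a\mid \mathbf V,S=1)]+\delta_2\mathbb P(S=0)\Big],$$ $$\theta_a\in\Big[\mathbb E[\tau_a(\mathbf V)\mid S=0]-\delta_1\mathbb E[\mathbb P(A=1-a\mid\mathbf V,S=1)\mid S=0]-\delta_2,\ \mathbb E[\tau_a(\mathbf V)\mid S=0]+\delta_1\mathbb E[\mathbb P(A=1-a\mid\mathbf V,S=1)\mid S=0]+\delta_2\Big].$$ Consequently $$\psi_1-\psi_0\in\big[\mathbb E[\tau_1(\mathbf V)-\tau_0(\mathbf V)]-\delta_1-2\delta_2\mathbb P(S=0),\ \mathbb E[\tau_1(\mathbf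 V)-\tau_0(\mathbf V)]+\delta_1+2\delta_2\mathbb P(S=0)\big],$$ $$\theta_1-\theta_0\in\big[\mathbb E[\tau_1(\mathbf V)-\tau_0(\mathbf V)\mid S=0]-\delta_1-2\delta_2,\ \mathbb E[\tau_1(\mathbf V)-\tau_0(\mathbf V)\mid S=0]+\delta_1+2\delta_2\big].$$
   Context: Let $(\mathbf X,A,Y,S)$ be a random vector with covariates $\mathbf X\in\mathbb R^d$, binary treatment $A\in\{0,1\}$, real outcome $Y$, and source indicator $S\in\{0,1\}$ with $\mathbb P(S=0)>0$. $\mathbf V$ is a sub-vector of $\mathbf X$. $Y^a$ ($a\in\{0,1\}$) are integrable potential outcomes. Nuisance functions: $\pi_a(\mathbf x)=\mathbb P(A=a\mid \mathbf X=\mathbf x,S=1)$, $\rho(\mathbf v)=\mathbb P(S=1\mid \mathbf V=\mathbf v)$, $\mu_a(\mathbf x)=\mathbb E[Y\mid \mathbf X=\mathbf x,A=a,S=1]$, $\tau_a(\mathbf v)=\mathbb E[\mu_a(\mathbf X)\mid \mathbf V=\mathbf v,S=1]$. Targets: $\psi_a=\mathbb E[Y^a]$, $\theta_a=\mathbb E[Y^a\mid S=0]$. *)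

theory Defs
  imports "HOL-Probability.Probability"
begin

definition condM :: "'a measure \<Rightarrow> ('a \<Rightarrow> bool) \<Rightarrow> 'a measure" where
  "condM M P = uniform_measure M {\<omega> \<in> space M. P \<omega>}"

definition is_cond_exp_fn ::
  "'a measure \<Rightarrow> ('a \<Rightarrow> real) \<Rightarrow> ('a \<Rightarrow> 'b) \<Rightarrow> 'b measure \<Rightarrow> ('b \<Rightarrow> real) \<Rightarrow> bool" where
  "is_cond_exp_fn N f Z MZ h \<longleftrightarrow>
     integrable N f \<and> Z \<in> measurable N MZ \<and> h \<in> borel_measurable MZ \<and>
     integrable N (\<lambda>\<omega>. h (Z \<omega>)) \<and>
     (\<forall>B \<in> sets MZ.
        (\<integral>\<omega>. indicator (Z -` B \<inter> space N) \<omega> * f \<omega> \<partial>N) =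
        (\<integral>\<omega>. indicator (Z -` B \<inter> space N) \<omega> * h (Z \<omega>) \<partial>N))"

end

theory Submission
  imports Defs
begin

text \<open>
  Write \<open>n a s\<close> for the regression of \<open>Y\<^sup>a\<close> on \<open>V\<close> in the population \<open>S = s\<close>.
  Within the trial arm \<open>A = a\<close> the regression of \<open>Y\<^sup>a\<close> on \<open>X\<close> is \<open>mu a\<close> by consistency, and
  treatment positivity spreads this identity to the whole trial population. Averaging over \<open>X\<close>
  given \<open>V\<close> then shows that \<open>n a 1 - tau a\<close> is the trial regression on \<open>V\<close> of
  \<open>1{A = 1 - a} (m a (1 - a) - m a a)(X)\<close>, so (iv) gives \<open>|n a 1 - tau a| \<le> \<delta>1 q (1 - a)\<close>;
  selection positivity makes this hold on the whole population, and with (v)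
  \<open>|n a 0 - tau a| \<le> \<delta>1 q (1 - a) + \<delta>2\<close>. Integrating the first bound over \<open>S = 1\<close> and the second
  over \<open>S = 0\<close> bounds \<open>\<psi>\<^sub>a\<close> and \<open>\<theta>\<^sub>a\<close>; the contrasts follow from \<open>q 0 + q 1 = 1\<close>.
\<close>

section \<open>Conditioning on an event\<close>

lemma space_condM [simp]: "space (condM M P) = space M"
  and sets_condM [simp]: "sets (condM M P) = sets M"
  by (simp_all add: condM_def)

lemma measurable_condM [simp]: "measurable (condM M P) N = measurable M N"
  by (rule measurable_cong_sets) simp_all

context
  fixes M :: "'a measure" and P :: "'a \<Rightarrow> bool"
  assumes prob: "prob_space M" and pred: "Measurable.pred M P"
    and pos: "0 < measure M {\<omega> \<in> space M. P \<omega>}"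
begin

private abbreviation (input) "E \<equiv> {\<omega> \<in> space M. P \<omega>}"

private lemma E_sets: "E \<in> sets M"
  using pred by measurable

private lemma emeasure_E: "emeasure M E = ennreal (measure M E)"
proof -
  interpret prob_space M by (fact prob)
  show ?thesis by (simp add: emeasure_eq_measure)
qed

lemma prob_space_condM: "prob_space (condM M P)"
  unfolding condM_def using pos emeasure_E by (intro prob_space_uniform_measure) auto

lemma AE_condM_iff: "(AE \<omega> in condM M P. Q \<omega>) \<longleftrightarrow> (AE \<omega> in M. P \<omega> \<longrightarrow> Q \<omega>)"
proof -
  have "(AE \<omega> in condM M P. Q \<omega>) \<longleftrightarrow> (AE \<omega> in M. \<omega> \<in> E \<longrightarrow> Q \<omega>)"
    unfolding condM_def using pos emeasure_E by (intro AE_uniform_measure) auto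
  also have "\<dots> \<longleftrightarrow> (AE \<omega> in M. P \<omega> \<longrightarrow> Q \<omega>)"
    by (intro AE_cong) auto
  finally show ?thesis .
qed

private lemma condM_eq_density:
  "condM M P = density M (\<lambda>\<omega>. ennreal (indicator E \<omega> / measure M E))"
  unfolding condM_def uniform_measure_def emeasure_E
  by (intro arg_cong[where f="density M"] ext) (auto simp: indicator_def divide_ennreal[of 1, simplified] pos)

lemma integral_condM:
  fixes f :: "'a \<Rightarrow> real"
  assumes "f \<in> borel_measurable M"
  shows "integral\<^sup>L (condM M P) f = (LINT \<omega>:E|M. f \<omega>) / measure M E"
  unfolding condM_eq_density using E_sets pos assms
  by (subst integral_real_density) (auto simp: set_lebesgue_integral_def)

lemma integrable_condM_iff:
  fixes f :: "'a \<Rightarrow> real"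
  assumes "f \<in> borel_measurable M"
  shows "integrable (condM M P) f \<longleftrightarrow> set_integrable M E f"
proof -
  have "integrable (condM M P) f \<longleftrightarrow> integrable M (\<lambda>\<omega>. indicator E \<omega> / measure M E * f \<omega>)"
    unfolding condM_eq_density using E_sets pos assms by (intro integrable_real_density) auto
  also have "\<dots> \<longleftrightarrow> integrable M (\<lambda>\<omega>. inverse (measure M E) * (indicator E \<omega> * f \<omega>))"
    by (simp only: divide_inverse ac_simps)
  finally show ?thesis
    using pos by (simp add: set_integrable_def)
qed

lemma integrable_condM:
  fixes f :: "'a \<Rightarrow> real"
  assumes "integrable M f"
  shows "integrable (condM M P) f"
  using assms integrable_mult_indicator[OF E_sets assms]
  by (simp add: integrable_condM_iff set_integrable_def)

end

section \<open>Equal conditional expectations on an event\<close>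

text \<open>\<open>same_cond_exp_on M E Z MZ f g\<close> states \<open>E[1\<^sub>E f | Z] = E[1\<^sub>E g | Z]\<close>; for \<open>g = h \<circ> Z\<close> it
  says that \<open>h(Z)\<close> is a version of \<open>E[f | Z]\<close> on the event \<open>E\<close>.\<close>

definition same_cond_exp_on ::
  "'a measure \<Rightarrow> 'a set \<Rightarrow> ('a \<Rightarrow> 'b) \<Rightarrow> 'b measure \<Rightarrow> ('a \<Rightarrow> real) \<Rightarrow> ('a \<Rightarrow> real) \<Rightarrow> bool" where
  "same_cond_exp_on M E Z MZ f g \<longleftrightarrow>
     E \<in> sets M \<and> Z \<in> measurable M MZ \<and> set_integrable M E f \<and> set_integrable M E g \<and>
     (\<forall>B \<in> sets MZ. (LINT \<omega>:E \<inter> Z -` B|M. f \<omega>) = (LINT \<omega>:E \<inter> Z -` B|M. g \<omega>))"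

lemma Int_vimage_sets:
  assumes E: "E \<in> sets M" and Z: "Z \<in> measurable M MZ" and B: "B \<in> sets MZ"
  shows "E \<inter> Z -` B \<in> sets M"
proof -
  have "E \<inter> Z -` B = E \<inter> (Z -` B \<inter> space M)"
    using sets.sets_into_space[OF E] by blast
  then show ?thesis
    using E measurable_sets[OF Z B] by simp
qed

lemma same_cond_exp_on_set_integral:
  assumes "same_cond_exp_on M E Z MZ f g"
  shows "(LINT \<omega>:E|M. f \<omega>) = (LINT \<omega>:E|M. g \<omega>)"
proof -
  have E: "E \<in> sets M" and Z: "Z \<in> measurable M MZ"
    and eq: "(LINT \<omega>:E \<inter> Z -` space MZ|M. f \<omega>) = (LINT \<omega>:E \<inter> Z -` space MZ|M. g \<omega>)"
    using assms by (auto simp: same_cond_exp_on_def)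
  have "E \<inter> Z -` space MZ = E"
    using sets.sets_into_space[OF E] measurable_space[OF Z] by auto
  then show ?thesis
    using eq by simp
qed

lemma same_cond_exp_on_sym:
  "same_cond_exp_on M E Z MZ f g \<Longrightarrow> same_cond_exp_on M E Z MZ g f"
  unfolding same_cond_exp_on_def by auto

lemma same_cond_exp_on_trans:
  "same_cond_exp_on M E Z MZ f g \<Longrightarrow> same_cond_exp_on M E Z MZ g h \<Longrightarrow> same_cond_exp_on M E Z MZ f h"
  unfolding same_cond_exp_on_def by auto

lemma same_cond_exp_on_add:
  assumes "same_cond_exp_on M E Z MZ f g" "same_cond_exp_on M E Z MZ f' g'"
  shows "same_cond_exp_on M E Z MZ (\<lambda>\<omega>. f \<omega> + f' \<omega>) (\<lambda>\<omega>. g \<omega> + g' \<omega>)"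
  unfolding same_cond_exp_on_def
proof (intro conjI ballI)
  have E: "E \<in> sets M" and Z: "Z \<in> measurable M MZ"
    and int: "set_integrable M E f" "set_integrable M E g" "set_integrable M E f'" "set_integrable M E g'"
    using assms by (auto simp: same_cond_exp_on_def)
  show "E \<in> sets M" "Z \<in> measurable M MZ" by fact+
  show "set_integrable M E (\<lambda>\<omega>. f \<omega> + f' \<omega>)" "set_integrable M E (\<lambda>\<omega>. g \<omega> + g' \<omega>)"
    using int by (auto intro: set_integral_add)
  fix B assume B: "B \<in> sets MZ"
  have sub: "set_integrable M (E \<inter> Z -` B) h" if "set_integrable M E h" for h :: "'a \<Rightarrow> real"
    using that Int_vimage_sets[OF E Z B] by (rule set_integrable_subset) auto
  show "(LINT \<omega>:E \<inter> Z -` B|M. f \<omega> + f' \<omega>) = (LINT \<omega>:E \<inter> Z -` B|M. g \<omega> + g' \<omega>)"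
    using assms B by (simp add: set_integral_add(2)[OF sub sub] int same_cond_exp_on_def)
qed

lemma same_cond_exp_on_cmult:
  "same_cond_exp_on M E Z MZ f g \<Longrightarrow> same_cond_exp_on M E Z MZ (\<lambda>\<omega>. c * f \<omega>) (\<lambda>\<omega>. c * g \<omega>)"
  unfolding same_cond_exp_on_def by auto

lemma same_cond_exp_on_diff:
  assumes "same_cond_exp_on M E Z MZ f g" "same_cond_exp_on M E Z MZ f' g'"
  shows "same_cond_exp_on M E Z MZ (\<lambda>\<omega>. f \<omega> - f' \<omega>) (\<lambda>\<omega>. g \<omega> - g' \<omega>)"
  using same_cond_exp_on_add[OF assms(1) same_cond_exp_on_cmult[OF assms(2), of "-1"]] by simp

lemma same_cond_exp_on_cong:
  assumes "same_cond_exp_on M E Z MZ f g" "\<And>\<omega>. \<omega> \<in> E \<Longrightarrow> f \<omega> = f' \<omega>"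
  shows "same_cond_exp_on M E Z MZ f' g"
proof -
  have "set_integrable M E f' = set_integrable M E f"
    using assms(2) by (intro set_integrable_cong) auto
  moreover have "(LINT \<omega>:E \<inter> Z -` B|M. f' \<omega>) = (LINT \<omega>:E \<inter> Z -` B|M. f \<omega>)" if "B \<in> sets MZ" for B
    using assms that unfolding same_cond_exp_on_def
    by (intro set_lebesgue_integral_cong) (auto simp: Int_vimage_sets)
  ultimately show ?thesis
    using assms(1) unfolding same_cond_exp_on_def by simp
qed

lemma same_cond_exp_on_AE_eq:
  assumes E: "E \<in> sets M" and Z: "Z \<in> measurable M MZ"
    and f: "f \<in> borel_measurable M" and g: "g \<in> borel_measurable M"
    and int: "set_integrable M E f" and eq: "AE \<omega>\<in>E in M. f \<omega> = g \<omega>"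
  shows "same_cond_exp_on M E Z MZ f g"
  unfolding same_cond_exp_on_def
proof (intro conjI ballI E Z int)
  show "set_integrable M E g"
    using int set_integrable_cong_AE[OF f g eq E] by simp
  fix B assume "B \<in> sets MZ"
  then show "(LINT \<omega>:E \<inter> Z -` B|M. f \<omega>) = (LINT \<omega>:E \<inter> Z -` B|M. g \<omega>)"
    using eq by (intro set_lebesgue_integral_cong_AE f g Int_vimage_sets[OF E Z]) auto
qed

lemma same_cond_exp_on_restrict:
  assumes FG: "same_cond_exp_on M F Z MZ f g" and E: "E \<in> sets M" and "F \<subseteq> E"
  shows "same_cond_exp_on M E Z MZ (\<lambda>\<omega>. indicator F \<omega> * f \<omega>) (\<lambda>\<omega>. indicator F \<omega> * g \<omega>)"
proof -
  have ind: "indicator E \<omega> * (indicator F \<omega> * h \<omega>) = indicator F \<omega> * h \<omega>"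
    and ind_B: "indicator (E \<inter> C) \<omega> * (indicator F \<omega> * h \<omega>) = indicator (F \<inter> C) \<omega> * h \<omega>"
    for h :: "'a \<Rightarrow> real" and C \<omega>
    using \<open>F \<subseteq> E\<close> by (auto split: split_indicator)
  show ?thesis
    using FG E unfolding same_cond_exp_on_def set_integrable_def set_lebesgue_integral_def
    by (simp add: ind ind_B)
qed

lemma same_cond_exp_on_compose:
  assumes EZ: "same_cond_exp_on M E Z MZ f g" and \<phi>: "\<phi> \<in> measurable MZ MW"
  shows "same_cond_exp_on M E (\<lambda>\<omega>. \<phi> (Z \<omega>)) MW f g"
proof -
  have E: "E \<in> sets M" and Z: "Z \<in> measurable M MZ"
    and eq: "\<And>B. B \<in> sets MZ \<Longrightarrow> (LINT \<omega>:E \<inter> Z -` B|M. f \<omega>) = (LINT \<omega>:E \<inter> Z -` B|M. g \<omega>)"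
    using EZ by (auto simp: same_cond_exp_on_def)
  have "(LINT \<omega>:E \<inter> (\<lambda>\<omega>. \<phi> (Z \<omega>)) -` B|M. f \<omega>) = (LINT \<omega>:E \<inter> (\<lambda>\<omega>. \<phi> (Z \<omega>)) -` B|M. g \<omega>)"
    if B: "B \<in> sets MW" for B
  proof -
    have "E \<inter> (\<lambda>\<omega>. \<phi> (Z \<omega>)) -` B = E \<inter> Z -` (\<phi> -` B \<inter> space MZ)"
      using sets.sets_into_space[OF E] measurable_space[OF Z] by auto
    then show ?thesis
      using eq[OF measurable_sets[OF \<phi> B]] by simp
  qed
  then show ?thesis
    using EZ \<phi> Z unfolding same_cond_exp_on_def by auto
qed

section \<open>Regression functions\<close>

lemma is_cond_exp_fnD:
  assumes "is_cond_exp_fn N f Z MZ h"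
  shows "h \<in> borel_measurable MZ" and "same_cond_exp_on N (space N) Z MZ f (\<lambda>\<omega>. h (Z \<omega>))"
proof -
  have int: "set_integrable N (space N) u \<longleftrightarrow> integrable N u" for u :: "_ \<Rightarrow> real"
    unfolding set_integrable_def by (intro Bochner_Integration.integrable_cong) auto
  have lint: "(LINT \<omega>:space N \<inter> Z -` B|N. u \<omega>) = (\<integral>\<omega>. indicator (Z -` B \<inter> space N) \<omega> * u \<omega> \<partial>N)"
    for B and u :: "_ \<Rightarrow> real"
    by (simp add: set_lebesgue_integral_def Int_commute)
  show "h \<in> borel_measurable MZ" "same_cond_exp_on N (space N) Z MZ f (\<lambda>\<omega>. h (Z \<omega>))"
    using assms by (auto simp: is_cond_exp_fn_def same_cond_exp_on_def int lint)
qed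

lemma is_cond_exp_fn_integral:
  assumes "is_cond_exp_fn N f Z MZ h"
  shows "integral\<^sup>L N f = (\<integral>\<omega>. h (Z \<omega>) \<partial>N)"
proof -
  have "(LINT \<omega>:space N|N. u \<omega>) = integral\<^sup>L N u" for u :: "_ \<Rightarrow> real"
    unfolding set_lebesgue_integral_def by (rule Bochner_Integration.integral_cong) auto
  then show ?thesis
    using same_cond_exp_on_set_integral[OF is_cond_exp_fnD(2)[OF assms]] by simp
qed

lemma is_cond_exp_fn_condMD:
  fixes f :: "'a \<Rightarrow> real"
  assumes prob: "prob_space M" and pred: "Measurable.pred M P"
    and pos: "0 < measure M {\<omega> \<in> space M. P \<omega>}"
    and cef: "is_cond_exp_fn (condM M P) f Z MZ h"
  shows "same_cond_exp_on M {\<omega> \<in> space M. P \<omega>} Z MZ f (\<lambda>\<omega>. h (Z \<omega>))"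
proof -
  let ?E = "{\<omega> \<in> space M. P \<omega>}"
  have same: "same_cond_exp_on (condM M P) (space M) Z MZ f (\<lambda>\<omega>. h (Z \<omega>))"
    using is_cond_exp_fnD(2)[OF cef] by simp
  have E: "?E \<in> sets M"
    using pred by measurable
  have Z: "Z \<in> measurable M MZ" and hZ: "(\<lambda>\<omega>. h (Z \<omega>)) \<in> borel_measurable M"
    and f: "f \<in> borel_measurable M"
    using cef by (auto simp: is_cond_exp_fn_def dest: borel_measurable_integrable)
  have set_integrable_iff: "set_integrable (condM M P) (space M) u \<longleftrightarrow> set_integrable M ?E u"
    if "u \<in> borel_measurable M" for u :: "'a \<Rightarrow> real"
  proof -
    have "set_integrable (condM M P) (space M) u \<longleftrightarrow> integrable (condM M P) u"
      unfolding set_integrable_def by (intro Bochner_Integration.integrable_cong) auto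
    then show ?thesis
      using integrable_condM_iff[OF prob pred pos that] by simp
  qed
  have set_integral_eq: "(LINT \<omega>:space M \<inter> Z -` B|condM M P. u \<omega>) = (LINT \<omega>:?E \<inter> Z -` B|M. u \<omega>) / measure M ?E"
    if u: "u \<in> borel_measurable M" and B: "B \<in> sets MZ" for u :: "'a \<Rightarrow> real" and B
  proof -
    have ZB: "space M \<inter> Z -` B \<in> sets M"
      using measurable_sets[OF Z B] by (simp add: Int_commute)
    have "(LINT \<omega>:space M \<inter> Z -` B|condM M P. u \<omega>)
        = (LINT \<omega>:?E|M. indicator (space M \<inter> Z -` B) \<omega> * u \<omega>) / measure M ?E"
      unfolding set_lebesgue_integral_def[of "condM M P"] using ZB u
      by (simp add: integral_condM[OF prob pred pos])
    also have "(LINT \<omega>:?E|M. indicator (space M \<inter> Z -` B) \<omega> * u \<omega>) = (LINT \<omega>:?E \<inter> Z -` B|M. u \<omega>)"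
      unfolding set_lebesgue_integral_def by (intro Bochner_Integration.integral_cong) (auto split: split_indicator)
    finally show ?thesis .
  qed
  show ?thesis
    using same E Z f hZ pos
    by (auto simp: same_cond_exp_on_def set_integrable_iff set_integral_eq)
qed

lemma AE_notin_of_set_integral_nonpos:
  fixes u :: "'a \<Rightarrow> real"
  assumes u: "set_integrable M E u" and G: "G \<in> sets M" "G \<subseteq> E"
    and pos: "AE \<omega>\<in>G in M. 0 < u \<omega>" and nonpos: "(LINT \<omega>:G|M. u \<omega>) \<le> 0"
  shows "AE \<omega> in M. \<omega> \<notin> G"
proof -
  have int: "integrable M (\<lambda>\<omega>. indicator E \<omega> * u \<omega>)"
    using u by (simp add: set_integrable_def)
  have uG: "set_integrable M G u"
    using u G by (rule set_integrable_subset)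
  have "AE \<omega>\<in>G in M. 0 \<le> u \<omega>"
    using pos by eventually_elim auto
  then have "0 \<le> (LINT \<omega>:G|M. u \<omega>)"
    using set_integral_mono_AE[OF _ uG, of "\<lambda>_. 0"] by (simp add: set_integrable_def)
  moreover have "(LINT \<omega>:G|M. indicator E \<omega> * u \<omega>) = (LINT \<omega>:G|M. u \<omega>)"
    using G by (intro set_lebesgue_integral_cong) auto
  moreover have "AE \<omega>\<in>G in M. 0 < indicator E \<omega> * u \<omega>"
    using pos by eventually_elim (use G(2) in \<open>auto split: split_indicator\<close>)
  ultimately have "G \<in> null_sets M"
    using nonpos by (intro null_if_pos_func_has_zero_int[OF int G(1)]) auto
  then show ?thesis
    by (rule AE_not_in)
qed

lemma AE_le_of_same_cond_exp:
  fixes g k :: "'b \<Rightarrow> real"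
  assumes g: "g \<in> borel_measurable MZ" and k: "k \<in> borel_measurable MZ"
    and fg: "same_cond_exp_on M E Z MZ f (\<lambda>\<omega>. g (Z \<omega>))"
    and fk: "same_cond_exp_on M E Z MZ f' (\<lambda>\<omega>. k (Z \<omega>))"
    and le: "AE \<omega>\<in>E in M. f \<omega> \<le> f' \<omega>"
  shows "AE \<omega>\<in>E in M. g (Z \<omega>) \<le> k (Z \<omega>)"
proof -
  have E: "E \<in> sets M" and Z: "Z \<in> measurable M MZ"
    and int: "set_integrable M E f" "set_integrable M E f'"
      "set_integrable M E (\<lambda>\<omega>. g (Z \<omega>))" "set_integrable M E (\<lambda>\<omega>. k (Z \<omega>))"
    using fg fk by (auto simp: same_cond_exp_on_def)
  define B where "B = {x \<in> space MZ. k x < g x}"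
  have B: "B \<in> sets MZ"
    unfolding B_def using g k by measurable
  define G where "G = E \<inter> Z -` B"
  have G: "G \<in> sets M" "G \<subseteq> E"
    unfolding G_def using Int_vimage_sets[OF E Z B] by auto
  have sub: "set_integrable M G u" if "set_integrable M E u" for u :: "_ \<Rightarrow> real"
    using that G by (rule set_integrable_subset)
  have "(LINT \<omega>:G|M. g (Z \<omega>) - k (Z \<omega>)) = (LINT \<omega>:G|M. g (Z \<omega>)) - (LINT \<omega>:G|M. k (Z \<omega>))"
    by (rule set_integral_diff(2)[OF sub sub]) (fact int)+
  also have "\<dots> = (LINT \<omega>:G|M. f \<omega>) - (LINT \<omega>:G|M. f' \<omega>)"
    using fg fk B unfolding same_cond_exp_on_def G_def by simp
  also have "\<dots> \<le> 0"
  proof -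
    have "AE \<omega>\<in>G in M. f \<omega> \<le> f' \<omega>"
      using le by eventually_elim (use G(2) in auto)
    then show ?thesis
      using set_integral_mono_AE[OF sub sub, of f f'] int by simp
  qed
  finally have "AE \<omega> in M. \<omega> \<notin> G"
    using G by (intro AE_notin_of_set_integral_nonpos[OF set_integral_diff(1)[OF int(3,4)]])
      (auto simp: G_def B_def)
  then show ?thesis
    using measurable_space[OF Z] sets.sets_into_space[OF E] by (auto simp: G_def B_def elim!: AE_mp)
qed

lemma AE_eq_of_same_cond_exp:
  fixes g k :: "'b \<Rightarrow> real"
  assumes g: "g \<in> borel_measurable MZ" and k: "k \<in> borel_measurable MZ"
    and fg: "same_cond_exp_on M E Z MZ f (\<lambda>\<omega>. g (Z \<omega>))"
    and fk: "same_cond_exp_on M E Z MZ f' (\<lambda>\<omega>. k (Z \<omega>))"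
    and eq: "AE \<omega>\<in>E in M. f \<omega> = f' \<omega>"
  shows "AE \<omega>\<in>E in M. g (Z \<omega>) = k (Z \<omega>)"
proof -
  have "AE \<omega>\<in>E in M. f \<omega> \<le> f' \<omega>" "AE \<omega>\<in>E in M. f' \<omega> \<le> f \<omega>"
    using eq by (eventually_elim, auto)+
  then have "AE \<omega>\<in>E in M. g (Z \<omega>) \<le> k (Z \<omega>)" "AE \<omega>\<in>E in M. k (Z \<omega>) \<le> g (Z \<omega>)"
    using AE_le_of_same_cond_exp[OF g k fg fk] AE_le_of_same_cond_exp[OF k g fk fg] by auto
  then show ?thesis
    by eventually_elim auto
qed

text \<open>The form in which the positivity assumptions enter.\<close>

lemma AE_of_same_cond_exp_indicator:
  assumes r: "r \<in> borel_measurable MZ"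
    and rC: "same_cond_exp_on M E Z MZ (indicator C) (\<lambda>\<omega>. r (Z \<omega>))"
    and pos: "AE \<omega>\<in>E in M. 0 < r (Z \<omega>)"
    and Q: "{x \<in> space MZ. Q x} \<in> sets MZ"
    and QC: "AE \<omega>\<in>E \<inter> C in M. Q (Z \<omega>)"
  shows "AE \<omega>\<in>E in M. Q (Z \<omega>)"
proof -
  have E: "E \<in> sets M" and Z: "Z \<in> measurable M MZ"
    and eq: "\<And>B. B \<in> sets MZ \<Longrightarrow> (LINT \<omega>:E \<inter> Z -` B|M. indicator C \<omega>) = (LINT \<omega>:E \<inter> Z -` B|M. r (Z \<omega>))"
    and int: "set_integrable M E (\<lambda>\<omega>. r (Z \<omega>))"
    using rC by (auto simp: same_cond_exp_on_def)
  define N where "N = {x \<in> space MZ. \<not> Q x}"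
  have "N = space MZ - {x \<in> space MZ. Q x}"
    by (auto simp: N_def)
  then have N: "N \<in> sets MZ"
    using Q by auto
  define G where "G = E \<inter> Z -` N"
  have G: "G \<in> sets M" "G \<subseteq> E"
    unfolding G_def using Int_vimage_sets[OF E Z N] by auto
  have "(LINT \<omega>:G|M. indicator C \<omega>) = (0::real)"
    unfolding set_lebesgue_integral_def
    by (rule integral_eq_zero_AE) (use QC in \<open>auto simp: G_def N_def split: split_indicator elim!: AE_mp\<close>)
  then have "AE \<omega> in M. \<omega> \<notin> G"
    using G pos eq[OF N] by (intro AE_notin_of_set_integral_nonpos[OF int]) (auto simp: G_def elim!: AE_mp)
  then show ?thesis
    using measurable_space[OF Z] sets.sets_into_space[OF E] by (auto simp: G_def N_def elim!: AE_mp)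
qed

lemma measure_pos_of_same_cond_exp_indicator:
  assumes M: "finite_measure M" and r: "r \<in> borel_measurable MZ"
    and rC: "same_cond_exp_on M E Z MZ (indicator C) (\<lambda>\<omega>. r (Z \<omega>))"
    and pos: "AE \<omega>\<in>E in M. 0 < r (Z \<omega>)"
    and E_pos: "0 < measure M E" and C: "C \<in> sets M"
  shows "0 < measure M (E \<inter> C)"
proof (rule ccontr)
  interpret finite_measure M by (fact M)
  have E: "E \<in> sets M"
    using rC by (simp add: same_cond_exp_on_def)
  assume "\<not> 0 < measure M (E \<inter> C)"
  then have "E \<inter> C \<in> null_sets M"
    using E C by (auto simp: null_sets_def emeasure_eq_measure measure_nonneg antisym)
  then have "AE \<omega>\<in>E \<inter> C in M. False"
    using AE_not_in by fastforce
  then have "AE \<omega>\<in>E in M. False"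
    using AE_of_same_cond_exp_indicator[OF r rC pos, of "\<lambda>_. False"] by simp
  then have "E \<in> null_sets M"
    using E by (simp add: AE_iff_null_sets)
  with E_pos show False
    by (simp add: measure_def null_setsD1)
qed

text \<open>On \<open>E\<close>, \<open>Ya\<close> and \<open>1\<^bsub>Fa\<^esub> ma(X) + 1\<^bsub>Fb\<^esub> mb(X)\<close> have the same conditional expectation given
  \<open>X\<close>, hence given the coarser \<open>Z\<close>; as \<open>mu(X) = ma(X)\<close>, the gap \<open>n(Z) - t(Z)\<close> is then a version
  of \<open>E[1\<^bsub>Fb\<^esub> (mb - ma)(X) | Z]\<close> on \<open>E\<close>.\<close>

lemma AE_abs_diff_le_cond_prob:
  fixes Ya :: "'a \<Rightarrow> real" and ma mb mu :: "'x \<Rightarrow> real" and n t q :: "'v \<Rightarrow> real"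
  assumes partition: "Fa \<inter> Fb = {}" "Fa \<union> Fb = E"
    and \<phi>: "\<phi> \<in> measurable MX MV" and factor: "Z = (\<lambda>\<omega>. \<phi> (X \<omega>))"
    and meas: "ma \<in> borel_measurable MX" "mb \<in> borel_measurable MX" "mu \<in> borel_measurable MX"
      "n \<in> borel_measurable MV" "t \<in> borel_measurable MV" "q \<in> borel_measurable MV"
    and ma: "same_cond_exp_on M Fa X MX Ya (\<lambda>\<omega>. ma (X \<omega>))"
    and mb: "same_cond_exp_on M Fb X MX Ya (\<lambda>\<omega>. mb (X \<omega>))"
    and mu: "AE \<omega>\<in>E in M. mu (X \<omega>) = ma (X \<omega>)"
    and n: "same_cond_exp_on M E Z MV Ya (\<lambda>\<omega>. n (Z \<omega>))"
    and t: "same_cond_exp_on M E Z MV (\<lambda>\<omega>. mu (X \<omega>)) (\<lambda>\<omega>. t (Z \<omega>))"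
    and q: "same_cond_exp_on M E Z MV (indicator Fb) (\<lambda>\<omega>. q (Z \<omega>))"
    and bound: "AE \<omega>\<in>Fb in M. \<bar>mb (X \<omega>) - ma (X \<omega>)\<bar> \<le> \<delta>"
  shows "AE \<omega>\<in>E in M. \<bar>n (Z \<omega>) - t (Z \<omega>)\<bar> \<le> \<delta> * q (Z \<omega>)"
proof -
  note n = n[unfolded factor] and t = t[unfolded factor] and q = q[unfolded factor]
  have E[measurable]: "E \<in> sets M" and [measurable]: "Fa \<in> sets M" "Fb \<in> sets M"
    and X[measurable]: "X \<in> measurable M MX"
    using n ma mb by (auto simp: same_cond_exp_on_def)
  note [measurable] = meas \<phi>
  define W where "W \<omega> = indicator Fa \<omega> * ma (X \<omega>) + indicator Fb \<omega> * mb (X \<omega>)" for \<omega>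
  define D where "D \<omega> = indicator Fb \<omega> * (mb (X \<omega>) - ma (X \<omega>))" for \<omega>
  have [measurable]: "W \<in> borel_measurable M" "D \<in> borel_measurable M"
    unfolding W_def D_def by measurable
  have "same_cond_exp_on M E X MX (\<lambda>\<omega>. indicator Fa \<omega> * Ya \<omega> + indicator Fb \<omega> * Ya \<omega>) W"
    unfolding W_def using partition
    by (intro same_cond_exp_on_add[OF same_cond_exp_on_restrict[OF ma E] same_cond_exp_on_restrict[OF mb E]]) auto
  then have "same_cond_exp_on M E X MX Ya W"
    by (rule same_cond_exp_on_cong) (use partition in \<open>auto split: split_indicator\<close>)
  then have "same_cond_exp_on M E (\<lambda>\<omega>. \<phi> (X \<omega>)) MV Ya W"
    using \<phi> by (rule same_cond_exp_on_compose)
  then have nt: "same_cond_exp_on M E (\<lambda>\<omega>. \<phi> (X \<omega>)) MV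
      (\<lambda>\<omega>. n (\<phi> (X \<omega>)) - t (\<phi> (X \<omega>))) (\<lambda>\<omega>. W \<omega> - mu (X \<omega>))"
    using same_cond_exp_on_diff[OF same_cond_exp_on_trans[OF same_cond_exp_on_sym[OF n]]
        same_cond_exp_on_sym[OF t]] by blast
  have "AE \<omega>\<in>E in M. W \<omega> - mu (X \<omega>) = D \<omega>"
    using mu by eventually_elim (use partition in \<open>auto simp: W_def D_def split: split_indicator\<close>)
  then have "same_cond_exp_on M E (\<lambda>\<omega>. \<phi> (X \<omega>)) MV (\<lambda>\<omega>. W \<omega> - mu (X \<omega>)) D"
    using nt by (intro same_cond_exp_on_AE_eq) (auto simp: same_cond_exp_on_def)
  then have D: "same_cond_exp_on M E (\<lambda>\<omega>. \<phi> (X \<omega>)) MV D (\<lambda>\<omega>. n (\<phi> (X \<omega>)) - t (\<phi> (X \<omega>)))"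
    using nt same_cond_exp_on_sym same_cond_exp_on_trans by blast
  have q\<delta>: "same_cond_exp_on M E (\<lambda>\<omega>. \<phi> (X \<omega>)) MV
      (\<lambda>\<omega>. \<delta> * indicator Fb \<omega>) (\<lambda>\<omega>. \<delta> * q (\<phi> (X \<omega>)))"
    using q by (rule same_cond_exp_on_cmult)
  have "AE \<omega>\<in>E in M. \<bar>D \<omega>\<bar> \<le> \<delta> * indicator Fb \<omega>"
    using bound by eventually_elim (auto simp: D_def split: split_indicator)
  then have "AE \<omega>\<in>E in M. D \<omega> \<le> \<delta> * indicator Fb \<omega>" "AE \<omega>\<in>E in M. -1 * D \<omega> \<le> \<delta> * indicator Fb \<omega>"
    by (eventually_elim, auto)+
  then have "AE \<omega>\<in>E in M. n (\<phi> (X \<omega>)) - t (\<phi> (X \<omega>)) \<le> \<delta> * q (\<phi> (X \<omega>))"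
      "AE \<omega>\<in>E in M. -1 * (n (\<phi> (X \<omega>)) - t (\<phi> (X \<omega>))) \<le> \<delta> * q (\<phi> (X \<omega>))"
    using AE_le_of_same_cond_exp[where g="\<lambda>v. n v - t v" and k="\<lambda>v. \<delta> * q v", OF _ _ D q\<delta>]
      AE_le_of_same_cond_exp[where g="\<lambda>v. -1 * (n v - t v)" and k="\<lambda>v. \<delta> * q v",
        OF _ _ same_cond_exp_on_cmult[OF D] q\<delta>]
    by auto
  then show ?thesis
    unfolding factor by eventually_elim auto
qed

lemma AE_cond_prob_partition:
  fixes p r :: "'b \<Rightarrow> real"
  assumes pm: "p \<in> borel_measurable MZ" and rm: "r \<in> borel_measurable MZ"
    and p: "same_cond_exp_on M E Z MZ (indicator F) (\<lambda>\<omega>. p (Z \<omega>))"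
    and r: "same_cond_exp_on M E Z MZ (indicator G) (\<lambda>\<omega>. r (Z \<omega>))"
    and C: "F \<in> sets M" "G \<in> sets M" "F \<inter> G = {}" "E \<subseteq> F \<union> G"
  shows "AE \<omega>\<in>E in M. 0 \<le> p (Z \<omega>) \<and> 0 \<le> r (Z \<omega>) \<and> p (Z \<omega>) + r (Z \<omega>) = 1"
proof -
  have E: "E \<in> sets M" and Z: "Z \<in> measurable M MZ"
    using p by (auto simp: same_cond_exp_on_def)
  have sum: "same_cond_exp_on M E Z MZ (\<lambda>\<omega>. indicator F \<omega> + indicator G \<omega>) (\<lambda>\<omega>. p (Z \<omega>) + r (Z \<omega>))"
    using p r by (rule same_cond_exp_on_add)
  have "set_integrable M E (\<lambda>\<omega>. indicator F \<omega> + indicator G \<omega> :: real)"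
    using sum by (simp add: same_cond_exp_on_def)
  then have "set_integrable M E (\<lambda>_. 1 :: real)"
    by (rule set_integrable_cong[THEN iffD1, rotated 3]) (use C in \<open>auto split: split_indicator\<close>)
  then have const: "same_cond_exp_on M E Z MZ (\<lambda>_. c) (\<lambda>_. c)" for c :: real
    using E Z set_integrable_mult_right[of c M E "\<lambda>_. 1"] by (intro same_cond_exp_on_AE_eq) auto
  have "AE \<omega>\<in>E in M. 0 \<le> p (Z \<omega>)" "AE \<omega>\<in>E in M. 0 \<le> r (Z \<omega>)"
    using AE_le_of_same_cond_exp[where g="\<lambda>_. 0", OF _ pm const[of 0] p]
      AE_le_of_same_cond_exp[where g="\<lambda>_. 0", OF _ rm const[of 0] r] by (auto split: split_indicator)
  moreover have "AE \<omega>\<in>E in M. p (Z \<omega>) + r (Z \<omega>) = 1"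
  proof (rule AE_eq_of_same_cond_exp[where g="\<lambda>v. p v + r v" and k="\<lambda>_. 1"])
    show "same_cond_exp_on M E Z MZ (\<lambda>\<omega>. indicator F \<omega> + indicator G \<omega>) (\<lambda>\<omega>. p (Z \<omega>) + r (Z \<omega>))"
      by (fact sum)
    show "AE \<omega>\<in>E in M. indicator F \<omega> + indicator G \<omega> = (1::real)"
      using C by (auto split: split_indicator)
  qed (use pm rm const in auto)
  ultimately show ?thesis
    by eventually_elim auto
qed

lemma abs_integral_diff_le:
  fixes f g h :: "'a \<Rightarrow> real"
  assumes f: "integrable M f" and g: "integrable M g" and h: "integrable M h"
    and le: "AE \<omega> in M. \<bar>f \<omega> - g \<omega>\<bar> \<le> h \<omega>"
  shows "\<bar>integral\<^sup>L M f - integral\<^sup>L M g\<bar> \<le> integral\<^sup>L M h"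
proof -
  have "\<bar>integral\<^sup>L M f - integral\<^sup>L M g\<bar> = \<bar>\<integral>\<omega>. f \<omega> - g \<omega> \<partial>M\<bar>"
    using f g by simp
  also have "\<dots> \<le> (\<integral>\<omega>. \<bar>f \<omega> - g \<omega>\<bar> \<partial>M)"
    by (rule integral_abs_bound)
  also have "\<dots> \<le> integral\<^sup>L M h"
    using f g h le by (intro integral_mono_AE) auto
  finally show ?thesis .
qed

lemma integral_add_eq_one:
  fixes f g :: "'a \<Rightarrow> real"
  assumes N: "prob_space N" and f: "integrable N f" and g: "integrable N g"
    and sum: "AE \<omega> in N. f \<omega> + g \<omega> = 1"
  shows "integral\<^sup>L N f + integral\<^sup>L N g = 1"
proof -
  have "integral\<^sup>L N f + integral\<^sup>L N g = (\<integral>\<omega>. f \<omega> + g \<omega> \<partial>N)"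
    using f g by simp
  also have "\<dots> = (\<integral>\<omega>. 1 \<partial>N)"
    using f g sum by (intro integral_cong_AE) auto
  finally show ?thesis
    using prob_space.prob_space[OF N] by simp
qed

lemma (in finite_measure) integrable_of_AE_abs_diff_le:
  fixes f g :: "'a \<Rightarrow> real"
  assumes g: "integrable M g" and f: "f \<in> borel_measurable M"
    and le: "AE \<omega> in M. \<bar>f \<omega> - g \<omega>\<bar> \<le> c"
  shows "integrable M f"
proof (rule Bochner_Integration.integrable_bound)
  show "integrable M (\<lambda>\<omega>. \<bar>g \<omega>\<bar> + c)"
    using g by auto
  show "AE \<omega> in M. norm (f \<omega>) \<le> norm (\<bar>g \<omega>\<bar> + c)"
    using le by eventually_elim auto
qed (fact f)

section \<open>The transportability model\<close>

text \<open>\<open>S = 1\<close> marks the trial population, \<open>S = 0\<close> the target population.\<close>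

locale transport_model = prob_space M
  for M :: "'o measure" +
  fixes X :: "'o \<Rightarrow> real ^ 'd" and V :: "'o \<Rightarrow> real ^ 'k" and idx :: "'k \<Rightarrow> 'd"
    and A :: "'o \<Rightarrow> nat" and S :: "'o \<Rightarrow> nat" and Y :: "'o \<Rightarrow> real"
    and Ypot :: "nat \<Rightarrow> 'o \<Rightarrow> real"
    and pi :: "nat \<Rightarrow> real ^ 'd \<Rightarrow> real" and rho :: "real ^ 'k \<Rightarrow> real"
    and mu :: "nat \<Rightarrow> real ^ 'd \<Rightarrow> real" and tau :: "nat \<Rightarrow> real ^ 'k \<Rightarrow> real"
    and q :: "nat \<Rightarrow> real ^ 'k \<Rightarrow> real"
    and m :: "nat \<Rightarrow> nat \<Rightarrow> real ^ 'd \<Rightarrow> real"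
    and n :: "nat \<Rightarrow> nat \<Rightarrow> real ^ 'k \<Rightarrow> real"
    and \<delta>1 \<delta>2 :: real
  assumes X_meas: "X \<in> borel_measurable M"
    and V_def: "\<forall>\<omega>. V \<omega> = (\<chi> j. X \<omega> $ idx j)"
    and A_meas: "A \<in> measurable M (count_space UNIV)" and A_bin: "\<forall>\<omega>\<in>space M. A \<omega> \<in> {0, 1}"
    and S_meas: "S \<in> measurable M (count_space UNIV)" and S_bin: "\<forall>\<omega>\<in>space M. S \<omega> \<in> {0, 1}"
    and Ypot_int: "\<forall>a\<in>{0, 1}. integrable M (Ypot a)"
    and S0_pos: "measure M {\<omega> \<in> space M. S \<omega> = 0} > 0"
    and pi_def: "\<forall>a\<in>{0, 1}. is_cond_exp_fn (condM M (\<lambda>\<omega>. S \<omega> = 1))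
                    (\<lambda>\<omega>. if A \<omega> = a then 1 else 0) X borel (pi a)"
    and rho_def: "is_cond_exp_fn M (\<lambda>\<omega>. if S \<omega> = 1 then 1 else 0) V borel rho"
    and mu_def: "\<forall>a\<in>{0, 1}. is_cond_exp_fn (condM M (\<lambda>\<omega>. A \<omega> = a \<and> S \<omega> = 1)) Y X borel (mu a)"
    and tau_def: "\<forall>a\<in>{0, 1}. is_cond_exp_fn (condM M (\<lambda>\<omega>. S \<omega> = 1))
                    (\<lambda>\<omega>. mu a (X \<omega>)) V borel (tau a)"
    and q_def: "\<forall>a\<in>{0, 1}. is_cond_exp_fn (condM M (\<lambda>\<omega>. S \<omega> = 1))
                    (\<lambda>\<omega>. if A \<omega> = a then 1 else 0) V borel (q a)"
    and m_def: "\<forall>a\<in>{0, 1}. \<forall>b\<in>{0, 1}.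
                  is_cond_exp_fn (condM M (\<lambda>\<omega>. A \<omega> = b \<and> S \<omega> = 1)) (Ypot a) X borel (m a b)"
    and n_def: "\<forall>a\<in>{0, 1}. \<forall>s\<in>{0, 1}.
                  is_cond_exp_fn (condM M (\<lambda>\<omega>. S \<omega> = s)) (Ypot a) V borel (n a s)"
    and consistency: "\<forall>a\<in>{0, 1}. \<forall>\<omega>\<in>space M. A \<omega> = a \<longrightarrow> Y \<omega> = Ypot a \<omega>"
    and treat_pos: "\<forall>a\<in>{0, 1}. AE \<omega> in condM M (\<lambda>\<omega>. S \<omega> = 1). pi a (X \<omega>) > 0"
    and sel_pos: "AE \<omega> in M. rho (V \<omega>) > 0"
    and bound1: "\<forall>a\<in>{0, 1}. AE \<omega> in condM M (\<lambda>\<omega>. S \<omega> = 1). \<bar>m a 1 (X \<omega>) - m a 0 (X \<omega>)\<bar> \<le> \<delta>1"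
    and bound2: "\<forall>a\<in>{0, 1}. AE \<omega> in M. \<bar>n a 0 (V \<omega>) - n a 1 (V \<omega>)\<bar> \<le> \<delta>2"
begin

abbreviation trial :: "'o set" where "trial \<equiv> {\<omega> \<in> space M. S \<omega> = 1}"
abbreviation target :: "'o set" where "target \<equiv> {\<omega> \<in> space M. S \<omega> = 0}"
abbreviation arm :: "nat \<Rightarrow> 'o set" where "arm a \<equiv> {\<omega> \<in> space M. A \<omega> = a \<and> S \<omega> = 1}"

lemma coords_measurable [measurable]: "(\<lambda>x :: real ^ 'd. \<chi> j. x $ idx j) \<in> borel_measurable borel"
  by (intro borel_measurable_continuous_onI continuous_intros)

lemma V_eq: "V = (\<lambda>\<omega>. (\<lambda>x. \<chi> j. x $ idx j) (X \<omega>))"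
  using V_def by auto

lemmas [measurable] = X_meas A_meas S_meas

lemma V_measurable [measurable]: "V \<in> borel_measurable M"
  unfolding V_eq by measurable

lemma rho_regression: "same_cond_exp_on M (space M) V borel (indicator trial) (\<lambda>\<omega>. rho (V \<omega>))"
  by (rule same_cond_exp_on_cong[OF is_cond_exp_fnD(2)[OF rho_def]]) (auto split: split_indicator)

lemma trial_pos: "0 < measure M trial"
  using measure_pos_of_same_cond_exp_indicator[OF _ is_cond_exp_fnD(1)[OF rho_def] rho_regression]
    sel_pos
  by (simp add: finite_measure_axioms prob_space Int_absorb1)

lemma AE_of_AE_trial:
  assumes "{v \<in> space borel. Q v} \<in> sets borel" and "AE \<omega>\<in>trial in M. Q (V \<omega>)"
  shows "AE \<omega> in M. Q (V \<omega>)"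
  using AE_of_same_cond_exp_indicator[OF is_cond_exp_fnD(1)[OF rho_def] rho_regression _ assms(1)]
    assms(2) sel_pos AE_space
  by (simp add: Int_absorb1)

lemma same_cond_exp_on_trialI:
  fixes f :: "'o \<Rightarrow> real"
  assumes "is_cond_exp_fn (condM M (\<lambda>\<omega>. S \<omega> = 1)) f Z MZ h"
  shows "same_cond_exp_on M trial Z MZ f (\<lambda>\<omega>. h (Z \<omega>))"
  by (rule is_cond_exp_fn_condMD[OF prob_space_axioms _ trial_pos assms]) measurable

lemma same_cond_exp_on_targetI:
  fixes f :: "'o \<Rightarrow> real"
  assumes "is_cond_exp_fn (condM M (\<lambda>\<omega>. S \<omega> = 0)) f Z MZ h"
  shows "same_cond_exp_on M target Z MZ f (\<lambda>\<omega>. h (Z \<omega>))"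
  by (rule is_cond_exp_fn_condMD[OF prob_space_axioms _ S0_pos assms]) measurable

lemma AE_trial_iff: "(AE \<omega> in condM M (\<lambda>\<omega>. S \<omega> = 1). P \<omega>) \<longleftrightarrow> (AE \<omega>\<in>trial in M. P \<omega>)"
  by (subst AE_condM_iff[OF prob_space_axioms _ trial_pos]) (auto intro: AE_cong simp: AE_iff_measurable)

lemma treatment_regression:
  assumes a: "a \<in> {0, 1}"
  shows "pi a \<in> borel_measurable borel"
    and "same_cond_exp_on M trial X borel (indicator {\<omega> \<in> space M. A \<omega> = a}) (\<lambda>\<omega>. pi a (X \<omega>))"
    and "AE \<omega>\<in>trial in M. 0 < pi a (X \<omega>)"
proof -
  have cef: "is_cond_exp_fn (condM M (\<lambda>\<omega>. S \<omega> = 1)) (\<lambda>\<omega>. if A \<omega> = a then 1 else 0) X borel (pi a)"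
    using pi_def a by blast
  show "pi a \<in> borel_measurable borel"
    using cef by (rule is_cond_exp_fnD(1))
  show "same_cond_exp_on M trial X borel (indicator {\<omega> \<in> space M. A \<omega> = a}) (\<lambda>\<omega>. pi a (X \<omega>))"
    by (rule same_cond_exp_on_cong[OF same_cond_exp_on_trialI[OF cef]]) (auto split: split_indicator)
  show "AE \<omega>\<in>trial in M. 0 < pi a (X \<omega>)"
    using treat_pos a by (simp only: AE_trial_iff)
qed

lemma arm_pos:
  assumes a: "a \<in> {0, 1}"
  shows "0 < measure M (arm a)"
proof -
  have "trial \<inter> {\<omega> \<in> space M. A \<omega> = a} = arm a"
    by auto
  then show ?thesis
    using measure_pos_of_same_cond_exp_indicator[OF finite_measure_axioms treatment_regression[OF a]]
      trial_pos by simp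
qed

lemma AE_trial_of_AE_arm:
  assumes a: "a \<in> {0, 1}"
    and Q: "{x \<in> space borel. Q x} \<in> sets borel" and arm: "AE \<omega>\<in>arm a in M. Q (X \<omega>)"
  shows "AE \<omega>\<in>trial in M. Q (X \<omega>)"
proof (rule AE_of_same_cond_exp_indicator[OF treatment_regression[OF a] Q])
  show "AE \<omega>\<in>trial \<inter> {\<omega> \<in> space M. A \<omega> = a} in M. Q (X \<omega>)"
    using arm by (rule AE_mp) (auto intro!: AE_I2)
qed

lemma propensity_regression:
  assumes a: "a \<in> {0, 1}"
  shows "q a \<in> borel_measurable borel"
    and "same_cond_exp_on M trial V borel (indicator {\<omega> \<in> space M. A \<omega> = a}) (\<lambda>\<omega>. q a (V \<omega>))"
proof -
  have cef: "is_cond_exp_fn (condM M (\<lambda>\<omega>. S \<omega> = 1)) (\<lambda>\<omega>. if A \<omega> = a then 1 else 0) V borel (q a)"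
    using q_def a by blast
  show "q a \<in> borel_measurable borel"
    using cef by (rule is_cond_exp_fnD(1))
  show "same_cond_exp_on M trial V borel (indicator {\<omega> \<in> space M. A \<omega> = a}) (\<lambda>\<omega>. q a (V \<omega>))"
    by (rule same_cond_exp_on_cong[OF same_cond_exp_on_trialI[OF cef]]) (auto split: split_indicator)
qed

lemma propensity_partition:
  "AE \<omega> in M. 0 \<le> q 0 (V \<omega>) \<and> 0 \<le> q 1 (V \<omega>) \<and> q 0 (V \<omega>) + q 1 (V \<omega>) = 1"
proof (rule AE_of_AE_trial)
  note [measurable] = propensity_regression(1)[of 0] propensity_regression(1)[of 1]
  show "{v \<in> space borel. 0 \<le> q 0 v \<and> 0 \<le> q 1 v \<and> q 0 v + q 1 v = 1} \<in> sets borel"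
    by measurable
  show "AE \<omega>\<in>trial in M. 0 \<le> q 0 (V \<omega>) \<and> 0 \<le> q 1 (V \<omega>) \<and> q 0 (V \<omega>) + q 1 (V \<omega>) = 1"
    using A_bin propensity_regression(2)[of 0] propensity_regression(2)[of 1]
    by (intro AE_cond_prob_partition[where MZ=borel and F="{\<omega> \<in> space M. A \<omega> = 0}"
        and G="{\<omega> \<in> space M. A \<omega> = 1}"]) (auto simp: propensity_regression)
qed

lemma outcome_gap_bound:
  assumes a: "a \<in> {0, 1}"
  shows "AE \<omega> in M. \<bar>n a 1 (V \<omega>) - tau a (V \<omega>)\<bar> \<le> \<delta>1 * q (1 - a) (V \<omega>)"
proof -
  define b where "b = 1 - a"
  have b: "b \<in> {0, 1}" "a = 0 \<and> b = 1 \<or> a = 1 \<and> b = 0"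
    using a by (auto simp: b_def)
  have cef_m: "is_cond_exp_fn (condM M (\<lambda>\<omega>. A \<omega> = c \<and> S \<omega> = 1)) (Ypot a) X borel (m a c)"
    if "c \<in> {0, 1}" for c
    using m_def a that by blast
  have cef_mu: "is_cond_exp_fn (condM M (\<lambda>\<omega>. A \<omega> = a \<and> S \<omega> = 1)) Y X borel (mu a)"
    using mu_def a by blast
  have cef_n: "is_cond_exp_fn (condM M (\<lambda>\<omega>. S \<omega> = 1)) (Ypot a) V borel (n a 1)"
    using n_def a by blast
  have cef_tau: "is_cond_exp_fn (condM M (\<lambda>\<omega>. S \<omega> = 1)) (\<lambda>\<omega>. mu a (X \<omega>)) V borel (tau a)"
    using tau_def a by blast
  have on_arm: "same_cond_exp_on M (arm c) X borel f (\<lambda>\<omega>. h (X \<omega>))"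
    if "c \<in> {0, 1}" "is_cond_exp_fn (condM M (\<lambda>\<omega>. A \<omega> = c \<and> S \<omega> = 1)) f X borel h" for c f h
    by (rule is_cond_exp_fn_condMD[OF prob_space_axioms _ arm_pos that(2)]) (use that(1) in measurable)
  note [measurable] = is_cond_exp_fnD(1)[OF cef_m[OF a]] is_cond_exp_fnD(1)[OF cef_mu]
  have mu_arm: "AE \<omega>\<in>arm a in M. mu a (X \<omega>) = m a a (X \<omega>)"
  proof (rule AE_eq_of_same_cond_exp[OF _ _ on_arm[OF a cef_mu] on_arm[OF a cef_m[OF a]]])
    show "AE \<omega>\<in>arm a in M. Y \<omega> = Ypot a \<omega>"
      using consistency a by auto
  qed measurable
  have mu_eq: "AE \<omega>\<in>trial in M. mu a (X \<omega>) = m a a (X \<omega>)"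
    by (rule AE_trial_of_AE_arm[OF a _ mu_arm]) measurable
  have "AE \<omega>\<in>trial in M. \<bar>m a 1 (X \<omega>) - m a 0 (X \<omega>)\<bar> \<le> \<delta>1"
    using bound1 a by (simp only: AE_trial_iff)
  then have bound: "AE \<omega>\<in>arm b in M. \<bar>m a b (X \<omega>) - m a a (X \<omega>)\<bar> \<le> \<delta>1"
    by eventually_elim (use b(2) in \<open>auto simp: abs_minus_commute\<close>)
  have q_arm: "same_cond_exp_on M trial V borel (indicator (arm b)) (\<lambda>\<omega>. q b (V \<omega>))"
    by (rule same_cond_exp_on_cong[OF propensity_regression(2)[OF b(1)]]) (auto split: split_indicator)
  have arms: "arm a \<inter> arm b = {}" "arm a \<union> arm b = trial"
    using A_bin b(2) by auto
  note [measurable] = is_cond_exp_fnD(1)[OF cef_m[OF b(1)]] is_cond_exp_fnD(1)[OF cef_n]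
    is_cond_exp_fnD(1)[OF cef_tau] propensity_regression(1)[OF b(1)]
  have "AE \<omega>\<in>trial in M. \<bar>n a 1 (V \<omega>) - tau a (V \<omega>)\<bar> \<le> \<delta>1 * q b (V \<omega>)"
    by (rule AE_abs_diff_le_cond_prob[OF arms coords_measurable V_eq _ _ _ _ _ _
        on_arm[OF a cef_m[OF a]] on_arm[OF b(1) cef_m[OF b(1)]] mu_eq
        same_cond_exp_on_trialI[OF cef_n] same_cond_exp_on_trialI[OF cef_tau] q_arm bound]) measurable
  then show ?thesis
    unfolding b_def[symmetric] by (rule AE_of_AE_trial[rotated]) measurable
qed

lemma propensity_integrable:
  assumes "c \<in> {0, 1}"
  shows "integrable M (\<lambda>\<omega>. q c (V \<omega>))"
proof (rule integrable_const_bound[where B=1])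
  show "AE \<omega> in M. norm (q c (V \<omega>)) \<le> 1"
    using propensity_partition by eventually_elim (use assms in auto)
  show "(\<lambda>\<omega>. q c (V \<omega>)) \<in> borel_measurable M"
    using propensity_regression(1)[OF assms] by measurable
qed

lemma target_outcome_gap_bound:
  assumes a: "a \<in> {0, 1}"
  shows "AE \<omega> in M. \<bar>n a 0 (V \<omega>) - tau a (V \<omega>)\<bar> \<le> \<delta>1 * q (1 - a) (V \<omega>) + \<delta>2"
proof -
  have "AE \<omega> in M. \<bar>n a 0 (V \<omega>) - n a 1 (V \<omega>)\<bar> \<le> \<delta>2"
    using bound2 a by blast
  with outcome_gap_bound[OF a] show ?thesis
    by eventually_elim (auto simp: abs_le_iff)
qed

lemma population_mean_bound:
  assumes a: "a \<in> {0, 1}"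
  shows "integrable M (\<lambda>\<omega>. tau a (V \<omega>))"
    and "\<bar>(\<integral>\<omega>. Ypot a \<omega> \<partial>M) - (\<integral>\<omega>. tau a (V \<omega>) \<partial>M)\<bar>
      \<le> \<delta>1 * (\<integral>\<omega>. q (1 - a) (V \<omega>) \<partial>M) + \<delta>2 * measure M target"
proof -
  have b: "1 - a \<in> {0, 1}"
    using a by auto
  have n1: "same_cond_exp_on M trial V borel (Ypot a) (\<lambda>\<omega>. n a 1 (V \<omega>))"
    using n_def a by (blast intro: same_cond_exp_on_trialI)
  have n0: "same_cond_exp_on M target V borel (Ypot a) (\<lambda>\<omega>. n a 0 (V \<omega>))"
    using n_def a by (blast intro: same_cond_exp_on_targetI)
  have Ypot: "integrable M (Ypot a)"
    using Ypot_int a by blast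
  have [measurable]: "tau a \<in> borel_measurable borel"
    using tau_def a is_cond_exp_fnD(1) by blast
  define W where "W \<omega> = indicator trial \<omega> * n a 1 (V \<omega>) + indicator target \<omega> * n a 0 (V \<omega>)" for \<omega>
  have W: "integrable M W"
    unfolding W_def by (intro Bochner_Integration.integrable_add)
      (use n1 n0 in \<open>auto simp: same_cond_exp_on_def set_integrable_def\<close>)
  have "integral\<^sup>L M (Ypot a) = (LINT \<omega>:trial \<union> target|M. Ypot a \<omega>)"
    using S_bin by (subst set_integral_space[OF Ypot, symmetric]) (auto intro!: arg_cong2[where f="set_lebesgue_integral M"])
  also have "\<dots> = (LINT \<omega>:trial|M. Ypot a \<omega>) + (LINT \<omega>:target|M. Ypot a \<omega>)"
    using n1 n0 by (intro set_integral_Un) (auto simp: same_cond_exp_on_def)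
  also have "\<dots> = (LINT \<omega>:trial|M. n a 1 (V \<omega>)) + (LINT \<omega>:target|M. n a 0 (V \<omega>))"
    using same_cond_exp_on_set_integral[OF n1] same_cond_exp_on_set_integral[OF n0] by simp
  also have "\<dots> = integral\<^sup>L M W"
    using n1 n0 unfolding W_def set_lebesgue_integral_def same_cond_exp_on_def set_integrable_def
    by (subst Bochner_Integration.integral_add) auto
  finally have Ypot_W: "integral\<^sup>L M (Ypot a) = integral\<^sup>L M W" .
  have gap: "AE \<omega> in M. \<bar>W \<omega> - tau a (V \<omega>)\<bar> \<le> \<delta>1 * q (1 - a) (V \<omega>) + \<delta>2 * indicator target \<omega>"
    using outcome_gap_bound[OF a] target_outcome_gap_bound[OF a] AE_space
    by eventually_elim (use S_bin in \<open>auto simp: W_def split: split_indicator\<close>)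
  show tau: "integrable M (\<lambda>\<omega>. tau a (V \<omega>))"
  proof (rule integrable_of_AE_abs_diff_le[OF W, where c="\<bar>\<delta>1\<bar> + \<bar>\<delta>2\<bar>"])
    show "(\<lambda>\<omega>. tau a (V \<omega>)) \<in> borel_measurable M"
      by measurable
    show "AE \<omega> in M. \<bar>tau a (V \<omega>) - W \<omega>\<bar> \<le> \<bar>\<delta>1\<bar> + \<bar>\<delta>2\<bar>"
      using gap propensity_partition
    proof eventually_elim
      case (elim \<omega>)
      have "\<delta>1 * q (1 - a) (V \<omega>) \<le> \<bar>\<delta>1\<bar>"
        using elim(2) b abs_ge_self[of \<delta>1] mult_left_le[of "q (1 - a) (V \<omega>)" "\<bar>\<delta>1\<bar>"]
        by (auto intro: order_trans[OF mult_right_mono])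
      moreover have "\<delta>2 * indicator target \<omega> \<le> \<bar>\<delta>2\<bar>"
        by (auto split: split_indicator)
      ultimately show ?case
        using elim(1) by linarith
    qed
  qed
  have target: "integrable M (indicator target :: 'o \<Rightarrow> real)"
    by (intro integrable_real_indicator) (measurable, simp add: less_top[symmetric])
  have "\<bar>integral\<^sup>L M W - (\<integral>\<omega>. tau a (V \<omega>) \<partial>M)\<bar>
      \<le> (\<integral>\<omega>. \<delta>1 * q (1 - a) (V \<omega>) + \<delta>2 * indicator target \<omega> \<partial>M)"
    using W tau propensity_integrable[OF b] gap target by (intro abs_integral_diff_le) auto
  also have "\<dots> = \<delta>1 * (\<integral>\<omega>. q (1 - a) (V \<omega>) \<partial>M) + \<delta>2 * measure M target"
    using propensity_integrable[OF b] target by (subst Bochner_Integration.integral_add) auto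
  finally show "\<bar>(\<integral>\<omega>. Ypot a \<omega> \<partial>M) - (\<integral>\<omega>. tau a (V \<omega>) \<partial>M)\<bar>
      \<le> \<delta>1 * (\<integral>\<omega>. q (1 - a) (V \<omega>) \<partial>M) + \<delta>2 * measure M target"
    using Ypot_W by simp
qed

lemma target_mean_bound:
  assumes a: "a \<in> {0, 1}"
  shows "\<bar>(\<integral>\<omega>. Ypot a \<omega> \<partial>condM M (\<lambda>\<omega>. S \<omega> = 0)) - (\<integral>\<omega>. tau a (V \<omega>) \<partial>condM M (\<lambda>\<omega>. S \<omega> = 0))\<bar>
      \<le> \<delta>1 * (\<integral>\<omega>. q (1 - a) (V \<omega>) \<partial>condM M (\<lambda>\<omega>. S \<omega> = 0)) + \<delta>2"
proof -
  let ?M0 = "condM M (\<lambda>\<omega>. S \<omega> = 0)"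
  interpret M0: prob_space ?M0
    by (rule prob_space_condM[OF prob_space_axioms _ S0_pos]) measurable
  have b: "1 - a \<in> {0, 1}"
    using a by auto
  have cef: "is_cond_exp_fn ?M0 (Ypot a) V borel (n a 0)"
    using n_def a by blast
  have integrable_M0: "integrable ?M0 f" if "integrable M f" for f :: "'o \<Rightarrow> real"
    by (rule integrable_condM[OF prob_space_axioms _ S0_pos that]) measurable
  have q0: "integrable ?M0 (\<lambda>\<omega>. q (1 - a) (V \<omega>))"
    using propensity_integrable[OF b] by (rule integrable_M0)
  have "AE \<omega> in ?M0. \<bar>n a 0 (V \<omega>) - tau a (V \<omega>)\<bar> \<le> \<delta>1 * q (1 - a) (V \<omega>) + \<delta>2"
    using target_outcome_gap_bound[OF a]
    by (subst AE_condM_iff[OF prob_space_axioms _ S0_pos]) (measurable, auto elim: AE_mp)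
  then have "\<bar>(\<integral>\<omega>. n a 0 (V \<omega>) \<partial>?M0) - (\<integral>\<omega>. tau a (V \<omega>) \<partial>?M0)\<bar>
      \<le> (\<integral>\<omega>. \<delta>1 * q (1 - a) (V \<omega>) + \<delta>2 \<partial>?M0)"
    using cef integrable_M0[OF population_mean_bound(1)[OF a]] q0
    by (intro abs_integral_diff_le) (auto simp: is_cond_exp_fn_def)
  also have "\<dots> = \<delta>1 * (\<integral>\<omega>. q (1 - a) (V \<omega>) \<partial>?M0) + \<delta>2"
    using q0 M0.prob_space by (subst Bochner_Integration.integral_add) auto
  finally show ?thesis
    using is_cond_exp_fn_integral[OF cef] by simp
qed

end

theorem theorem2:
  fixes M :: "'o measure"
    and X :: "'o \<Rightarrow> real ^ 'd" and V :: "'o \<Rightarrow> real ^ 'k" and idx :: "'k \<Rightarrow> 'd"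
    and A :: "'o \<Rightarrow> nat" and S :: "'o \<Rightarrow> nat" and Y :: "'o \<Rightarrow> real"
    and Ypot :: "nat \<Rightarrow> 'o \<Rightarrow> real"
    and pi :: "nat \<Rightarrow> real ^ 'd \<Rightarrow> real" and rho :: "real ^ 'k \<Rightarrow> real"
    and mu :: "nat \<Rightarrow> real ^ 'd \<Rightarrow> real" and tau :: "nat \<Rightarrow> real ^ 'k \<Rightarrow> real"
    and q :: "nat \<Rightarrow> real ^ 'k \<Rightarrow> real"
    and m :: "nat \<Rightarrow> nat \<Rightarrow> real ^ 'd \<Rightarrow> real"
    and n :: "nat \<Rightarrow> nat \<Rightarrow> real ^ 'k \<Rightarrow> real"
    and \<delta>1 \<delta>2 :: real
  assumes M: "prob_space M"
    and X_meas: "X \<in> borel_measurable M"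
    and idx: "inj idx"
    and V_def: "\<forall>\<omega>. V \<omega> = (\<chi> j. X \<omega> $ idx j)"
    and A_meas: "A \<in> measurable M (count_space UNIV)" and A_bin: "\<forall>\<omega>\<in>space M. A \<omega> \<in> {0, 1}"
    and S_meas: "S \<in> measurable M (count_space UNIV)" and S_bin: "\<forall>\<omega>\<in>space M. S \<omega> \<in> {0, 1}"
    and Y_meas: "Y \<in> borel_measurable M"
    and Ypot_int: "\<forall>a\<in>{0, 1}. integrable M (Ypot a)"
    and S0_pos: "measure M {\<omega> \<in> space M. S \<omega> = 0} > 0"
    \<comment> \<open>nuisance functions (versions of the regression functions)\<close>
    and pi_def: "\<forall>a\<in>{0, 1}. is_cond_exp_fn (condM M (\<lambda>\<omega>. S \<omega> = 1))
                    (\<lambda>\<omega>. if A \<omega> = a then 1 else 0) X borel (pi a)"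
    and rho_def: "is_cond_exp_fn M (\<lambda>\<omega>. if S \<omega> = 1 then 1 else 0) V borel rho"
    and mu_def: "\<forall>a\<in>{0, 1}. is_cond_exp_fn (condM M (\<lambda>\<omega>. A \<omega> = a \<and> S \<omega> = 1)) Y X borel (mu a)"
    and tau_def: "\<forall>a\<in>{0, 1}. is_cond_exp_fn (condM M (\<lambda>\<omega>. S \<omega> = 1))
                    (\<lambda>\<omega>. mu a (X \<omega>)) V borel (tau a)"
    and q_def: "\<forall>a\<in>{0, 1}. is_cond_exp_fn (condM M (\<lambda>\<omega>. S \<omega> = 1))
                    (\<lambda>\<omega>. if A \<omega> = a then 1 else 0) V borel (q a)"
    and m_def: "\<forall>a\<in>{0, 1}. \<forall>b\<in>{0, 1}.
                  is_cond_exp_fn (condM M (\<lambda>\<omega>. A \<omega> = b \<and> S \<omega> = 1)) (Ypot a) X borel (m a b)"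
    and n_def: "\<forall>a\<in>{0, 1}. \<forall>s\<in>{0, 1}.
                  is_cond_exp_fn (condM M (\<lambda>\<omega>. S \<omega> = s)) (Ypot a) V borel (n a s)"
    \<comment> \<open>(i) consistency\<close>
    and consistency: "\<forall>a\<in>{0, 1}. \<forall>\<omega>\<in>space M. A \<omega> = a \<longrightarrow> Y \<omega> = Ypot a \<omega>"
    \<comment> \<open>(ii) treatment positivity\<close>
    and treat_pos: "\<forall>a\<in>{0, 1}. AE \<omega> in condM M (\<lambda>\<omega>. S \<omega> = 1). pi a (X \<omega>) > 0"
    \<comment> \<open>(iii) selection positivity\<close>
    and sel_pos: "AE \<omega> in M. rho (V \<omega>) > 0"
    \<comment> \<open>(iv) bounded unmeasured confounding\<close>
    and d1_pos: "\<delta>1 > 0"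
    and bound1: "\<forall>a\<in>{0, 1}. AE \<omega> in condM M (\<lambda>\<omega>. S \<omega> = 1). \<bar>m a 1 (X \<omega>) - m a 0 (X \<omega>)\<bar> \<le> \<delta>1"
    \<comment> \<open>(v) bounded violation of transportability\<close>
    and d2_pos: "\<delta>2 > 0"
    and bound2: "\<forall>a\<in>{0, 1}. AE \<omega> in M. \<bar>n a 0 (V \<omega>) - n a 1 (V \<omega>)\<bar> \<le> \<delta>2"
  shows "(\<forall>a\<in>{0, 1}.
            (\<integral>\<omega>. Ypot a \<omega> \<partial>M) \<in>
              {(\<integral>\<omega>. tau a (V \<omega>) \<partial>M) - \<delta>1 * (\<integral>\<omega>. q (1 - a) (V \<omega>) \<partial>M)
                 - \<delta>2 * measure M {\<omega> \<in> space M. S \<omega> = 0} ..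
               (\<integral>\<omega>. tau a (V \<omega>) \<partial>M) + \<delta>1 * (\<integral>\<omega>. q (1 - a) (V \<omega>) \<partial>M)
                 + \<delta>2 * measure M {\<omega> \<in> space M. S \<omega> = 0}} \<and>
            (\<integral>\<omega>. Ypot a \<omega> \<partial>condM M (\<lambda>\<omega>. S \<omega> = 0)) \<in>
              {(\<integral>\<omega>. tau a (V \<omega>) \<partial>condM M (\<lambda>\<omega>. S \<omega> = 0))
                 - \<delta>1 * (\<integral>\<omega>. q (1 - a) (V \<omega>) \<partial>condM M (\<lambda>\<omega>. S \<omega> = 0)) - \<delta>2 ..
               (\<integral>\<omega>. tau a (V \<omega>) \<partial>condM M (\<lambda>\<omega>. S \<omega> = 0))
                 + \<delta>1 * (\<integral>\<omega>. q (1 - a) (V \<omega>) \<partial>condM M (\<lambda>\<omega>. S \<omega> = 0)) + \<delta>2})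
       \<and> (\<integral>\<omega>. Ypot 1 \<omega> \<partial>M) - (\<integral>\<omega>. Ypot 0 \<omega> \<partial>M) \<in>
           {(\<integral>\<omega>. tau 1 (V \<omega>) - tau 0 (V \<omega>) \<partial>M) - \<delta>1 - 2 * \<delta>2 * measure M {\<omega> \<in> space M. S \<omega> = 0} ..
            (\<integral>\<omega>. tau 1 (V \<omega>) - tau 0 (V \<omega>) \<partial>M) + \<delta>1 + 2 * \<delta>2 * measure M {\<omega> \<in> space M. S \<omega> = 0}}
       \<and> (\<integral>\<omega>. Ypot 1 \<omega> \<partial>condM M (\<lambda>\<omega>. S \<omega> = 0)) - (\<integral>\<omega>. Ypot 0 \<omega> \<partial>condM M (\<lambda>\<omega>. S \<omega> = 0)) \<in>
           {(\<integral>\<omega>. tau 1 (V \<omega>) - tau 0 (V \<omega>) \<partial>condM M (\<lambda>\<omega>. S \<omega> = 0)) - \<delta>1 - 2 * \<delta>2 ..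
            (\<integral>\<omega>. tau 1 (V \<omega>) - tau 0 (V \<omega>) \<partial>condM M (\<lambda>\<omega>. S \<omega> = 0)) + \<delta>1 + 2 * \<delta>2}"
proof -
  interpret transport_model M X V idx A S Y Ypot pi rho mu tau q m n \<delta>1 \<delta>2
    by (rule transport_model.intro[OF M transport_model_axioms.intro]) (fact assms)+
  let ?M0 = "condM M (\<lambda>\<omega>. S \<omega> = 0)"
  have "(\<integral>\<omega>. q 0 (V \<omega>) \<partial>M) + (\<integral>\<omega>. q 1 (V \<omega>) \<partial>M) = 1"
    using propensity_partition propensity_integrable
    by (intro integral_add_eq_one prob_space_axioms) (auto elim: AE_mp)
  then have "\<delta>1 * (\<integral>\<omega>. q 0 (V \<omega>) \<partial>M) + \<delta>1 * (\<integral>\<omega>. q 1 (V \<omega>) \<partial>M) = \<delta>1"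
    by (simp flip: distrib_left)
  moreover have "(\<integral>\<omega>. q 0 (V \<omega>) \<partial>?M0) + (\<integral>\<omega>. q 1 (V \<omega>) \<partial>?M0) = 1"
    using propensity_partition propensity_integrable
    by (intro integral_add_eq_one prob_space_condM[OF M _ S0_pos] integrable_condM[OF M _ S0_pos])
      (auto simp: AE_condM_iff[OF M _ S0_pos] elim: AE_mp)
  then have "\<delta>1 * (\<integral>\<omega>. q 0 (V \<omega>) \<partial>?M0) + \<delta>1 * (\<integral>\<omega>. q 1 (V \<omega>) \<partial>?M0) = \<delta>1"
    by (simp flip: distrib_left)
  moreover have "(\<integral>\<omega>. tau 1 (V \<omega>) - tau 0 (V \<omega>) \<partial>N) = (\<integral>\<omega>. tau 1 (V \<omega>) \<partial>N) - (\<integral>\<omega>. tau 0 (V \<omega>) \<partial>N)"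
    if "N = M \<or> N = ?M0" for N
    using that population_mean_bound(1)[of 0] population_mean_bound(1)[of 1]
    by (auto intro!: Bochner_Integration.integral_diff integrable_condM[OF M _ S0_pos])
  ultimately show ?thesis
    using population_mean_bound(2)[of 0] population_mean_bound(2)[of 1]
      target_mean_bound[of 0] target_mean_bound[of 1]
    by (simp add: abs_le_iff)
qed

end
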